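(* Let $K$ be a field, let $L$ be a finite lattice, and let $R=H[L]=K[L]/I_L$. The following statements are equivalent: (1) $L$ is distributive; (2) the set of all poset ideals of $R$ forms a Koszul filtration of $R$; (3) $R$ admits a Koszul filtration in which every ideal is a poset ideal of $R$.
   Context: $K[L]$ denotes the polynomial ring over $K$ whose variables are the elements of $L$. For incomparable $a,b\in L$, the binomial $ab-(a\vee b)(a\wedge b)$ is called a basic binomial (Hibi relation); $I_L$ is the ideal of $K[L]$ generated by all basic binomials, and $H[L]=K[L]/I_L$. $H[L]$ is standard graded with $\deg(a)=1$ for each $a\in L$. A subset $J\subseteq L$ is a poset ideal of $L$ if $a\le b$ and $b\in J$ imply $a\in J$. For a poset ideal $J$ of $L$, $(\overline{J})$ denotes the ideal of $H[L]$ generated by the residue classes $\overline{a}=a+I_L$, $a\in J$; ideals of this form are called poset ideals of $H[L]$. For a standard graded $K$-algebra $R$ with maximal graded ideal $\mathfrak m$, a collection $\mathcal F$ of ideals of $R$ is a Koszul filtration if: (i) every ideal in $\mathcal F$ is generated by linear forms; (ii) $0$ and $\mathfrak m$ belong to $\mathcal F$; (iii) for every ideal $0\ne I\in\mathcal F$ there exists $J\in\mathcal F$ with $J\subset I$, $I/J$ cyclic, and $J:I\in\mathcal F$. *)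

theory Defs
  imports Main "HOL-Library.Multiset" "HOL-Library.Poly_Mapping"
begin

text \<open>The polynomial ring K[L]: finitely supported maps from monomials
  (finite multisets of lattice elements) to coefficients in K.\<close>
type_synonym ('a, 'k) lpoly = "'a multiset \<Rightarrow>\<^sub>0 'k"

definition var :: "'a \<Rightarrow> ('a, 'k::comm_ring_1) lpoly" where
  "var a = Poly_Mapping.single {#a#} 1"

definition gen_ideal :: "'r::comm_ring_1 set \<Rightarrow> 'r set" where
  "gen_ideal S = {f. \<exists>A c. finite A \<and> A \<subseteq> S \<and> f = (\<Sum>s\<in>A. c s * s)}"

definition linear_form :: "('a, 'k::comm_ring_1) lpoly \<Rightarrow> bool" where
  "linear_form f \<longleftrightarrow> (\<forall>m \<in> Poly_Mapping.keys f. size m = 1)"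

definition basic_binomials :: "('a::lattice, 'k::comm_ring_1) lpoly set" where
  "basic_binomials = {var a * var b - var (sup a b) * var (inf a b) | a b.
      \<not> a \<le> b \<and> \<not> b \<le> a}"

definition hibi_ideal :: "('a::lattice, 'k::comm_ring_1) lpoly set" where
  "hibi_ideal = gen_ideal basic_binomials"

text \<open>Ideals of R = H[L] = K[L]/I_L are represented by their preimages in K[L],
  i.e. ideals of K[L] containing I_L. The zero ideal of R is I_L itself; the
  ideal of R generated by residue classes of a set S is gen_ideal (I_L \<union> S);
  the colon ideal J :_R I corresponds to {f. \<forall>g\<in>I. f * g \<in> J}.\<close>

definition gen_R :: "('a::lattice, 'k::comm_ring_1) lpoly set \<Rightarrow> ('a, 'k) lpoly set" where
  "gen_R S = gen_ideal (hibi_ideal \<union> S)"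

definition max_ideal_R :: "('a::lattice, 'k::comm_ring_1) lpoly set" where
  "max_ideal_R = gen_R (range var)"

definition colon :: "'r::comm_ring_1 set \<Rightarrow> 'r set \<Rightarrow> 'r set" where
  "colon J I = {f. \<forall>g\<in>I. f * g \<in> J}"

definition koszul_filtration_R :: "('a::lattice, 'k::comm_ring_1) lpoly set set \<Rightarrow> bool" where
  "koszul_filtration_R F \<longleftrightarrow>
     (\<forall>I\<in>F. \<exists>S. (\<forall>f\<in>S. linear_form f) \<and> I = gen_R S) \<and>
     hibi_ideal \<in> F \<and> max_ideal_R \<in> F \<and>
     (\<forall>I\<in>F. I \<noteq> hibi_ideal \<longrightarrow>
        (\<exists>J\<in>F. J \<subseteq> I \<and> (\<exists>f. I = gen_R (J \<union> {f})) \<and> colon J I \<in> F))"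

definition poset_ideal :: "'a::order set \<Rightarrow> bool" where
  "poset_ideal J \<longleftrightarrow> (\<forall>a b. a \<le> b \<and> b \<in> J \<longrightarrow> a \<in> J)"

definition poset_ideal_R :: "('a::lattice, 'k::comm_ring_1) lpoly set \<Rightarrow> bool" where
  "poset_ideal_R I \<longleftrightarrow> (\<exists>J. poset_ideal J \<and> I = gen_R (var ` J))"

end

theory Submission
  imports Defs
begin

text \<open>(1) \<Longrightarrow> (2): let A be a poset ideal of L with a maximal element x. Then the colon ideal
  (A - {x}) : x is generated by the variables y that do not lie above x, because x is a
  nonzerodivisor modulo that ideal. This rests on the straightening law: modulo I_L
  every polynomial is a combination of chain monomials, and in a finite distributive lattice a
  chain monomial is determined by how many of its factors lie above each join-prime element.

  (3) \<Longrightarrow> (1): suppose a \<sqinter> b = c \<sqinter> b and a \<squnion> b = c \<squnion> b with a \<noteq> c, and put o = a \<sqinter> b,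
  i = a \<squnion> b. Among the ideals of the filtration containing the variable o take one, I, with the
  fewest variables; its predecessor J in the filtration lacks o, and I has no other new
  variable. Then i (a - c) lies in J : I, which is generated by variables not above o, whereas
  i (a - c) is not in the ideal generated by the variables not above a. So L is cancellative,
  hence distributive.

  Non-membership in ideals generated by I_L and variables is always certified by a linear
  functional summing the coefficients over a set of monomials that is stable under replacing
  two incomparable factors by their join and meet.\<close>

section \<open>Cancellative lattices are distributive\<close>

lemma median_lower_le_upper:
  fixes x y z :: "'a::lattice"
  shows "sup (sup (inf x y) (inf y z)) (inf z x) \<le> inf (inf (sup x y) (sup y z)) (sup z x)"
  by (smt (verit, ccfv_threshold) inf.boundedI inf.cobounded1 inf.cobounded2
      sup.commute sup.left_commute sup_idem sup_mono)

lemma modular_diamond_inf: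
  fixes x y z d e :: "'a::lattice"
  assumes modular: "\<And>a b c :: 'a. a \<le> c \<Longrightarrow> sup a (inf b c) = inf (sup a b) c"
    and d: "d = sup (sup (inf x y) (inf y z)) (inf z x)"
    and e: "e = inf (inf (sup x y) (sup y z)) (sup z x)"
  shows "inf (sup d (inf x e)) (sup d (inf y e)) = d"
proof -
  have "d \<le> e"
    using median_lower_le_upper d e by simp
  have "inf (sup d (inf x e)) (sup d (inf y e)) = sup d (inf (inf x e) (sup d (inf y e)))"
    using modular[of d "sup d (inf y e)" "inf x e"] by simp
  moreover have "sup d (inf y e) = inf (sup y (inf z x)) e"
    using modular[OF \<open>d \<le> e\<close>, of y] d
    by (metis (no_types, lifting) inf_commute sup_assoc sup_commute sup_inf_absorb)
  moreover have "inf (inf x e) (inf (sup y (inf z x)) e) = inf x (sup y (inf z x))"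
    using e by (smt (verit) inf_assoc inf_commute inf_sup_absorb sup_commute sup_inf_absorb
        sup_left_commute)
  moreover have "inf x (sup y (inf z x)) = sup (inf z x) (inf y x)"
    using modular[of "inf z x" x y] by (simp add: inf_commute sup_commute)
  moreover have "sup (inf z x) (inf y x) \<le> d"
    using d by (simp add: inf_commute le_supI1 le_supI2)
  ultimately show ?thesis
    by (simp add: sup_absorb1)
qed

lemma modular_diamond_sup:
  fixes x y z d e :: "'a::lattice"
  assumes modular: "\<And>a b c :: 'a. a \<le> c \<Longrightarrow> sup a (inf b c) = inf (sup a b) c"
    and d: "d = sup (sup (inf x y) (inf y z)) (inf z x)"
    and e: "e = inf (inf (sup x y) (sup y z)) (sup z x)"
  shows "sup (sup d (inf x e)) (sup d (inf y e)) = e"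
proof -
  have "d \<le> e"
    using median_lower_le_upper d e by simp
  have dx: "sup d (inf x e) = inf (sup d x) e" and dy: "sup d (inf y e) = inf (sup d y) e"
    using modular[OF \<open>d \<le> e\<close>] by (simp_all add: sup_commute)
  have "sup d y = sup y (inf z x)"
    using d by (metis (no_types, lifting) inf_commute sup_assoc sup_commute sup_inf_absorb)
  moreover have "sup d x = sup x (inf y z)"
    using d by (metis (no_types, lifting) inf_commute sup_assoc sup_commute sup_inf_absorb
        sup_left_commute)
  moreover have "inf (sup y (inf z x)) e = inf (sup y (inf z x)) (sup z x)"
    using e by (smt (verit) distrib_sup_le inf.orderE inf_assoc inf_commute sup_commute)
  moreover have "inf (sup y (inf z x)) (sup z x) = sup (inf z x) (inf y (sup z x))"
    using modular[of "inf z x" "sup z x" y] by (metis le_supI1 inf_le1 sup_commute)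
  ultimately have "sup (inf (sup d y) e) (sup d x)
      = sup (sup x (inf y (sup z x))) (sup (inf y z) (inf z x))"
    by (simp add: sup_aci)
  moreover have "sup (inf (sup d x) e) (inf (sup d y) e) = inf (sup (inf (sup d y) e) (sup d x)) e"
    using modular[of "inf (sup d y) e" e "sup d x"] by (simp add: sup_commute)
  moreover have "e \<le> sup x (inf y (sup z x))"
    using modular[of x "sup z x" y] e by (simp add: le_infI1)
  ultimately show ?thesis
    unfolding dx dy by (simp add: inf_absorb2 le_supI1)
qed

lemma cancellative_imp_modular:
  fixes a b c :: "'a::lattice"
  assumes cancel: "\<And>a b c :: 'a. inf a b = inf c b \<Longrightarrow> sup a b = sup c b \<Longrightarrow> a = c"
    and "a \<le> c"
  shows "sup a (inf b c) = inf (sup a b) c"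
proof (rule cancel[of _ b])
  have "inf (sup a (inf b c)) b = inf b c"
    using \<open>a \<le> c\<close> by (intro order.antisym) (auto intro: le_infI1 le_infI2 simp: le_inf_iff)
  moreover have "inf (inf (sup a b) c) b = inf b c"
    by (rule order.antisym) (auto intro: le_infI1 le_infI2 le_supI2 simp: le_inf_iff)
  ultimately show "inf (sup a (inf b c)) b = inf (inf (sup a b) c) b"
    by simp
  have "sup (sup a (inf b c)) b = sup a b"
    by (rule order.antisym) (auto intro: le_supI1 le_supI2 le_infI1)
  moreover have "sup (inf (sup a b) c) b = sup a b"
    using \<open>a \<le> c\<close> by (intro order.antisym) (auto intro: le_supI1 le_supI2 le_infI1 simp: le_sup_iff)
  ultimately show "sup (sup a (inf b c)) b = sup (inf (sup a b) c) b"
    by simp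
qed

text \<open>With d and e the lower and upper medians of x, y, z, the three elements
  d \<squnion> (x \<sqinter> e), d \<squnion> (y \<sqinter> e), d \<squnion> (z \<sqinter> e) of a modular lattice form a diamond with bottom d
  and top e; cancellation identifies two of them, which collapses the diamond.\<close>

lemma cancellative_median_eq:
  fixes x y z :: "'a::lattice"
  assumes cancel: "\<And>a b c :: 'a. inf a b = inf c b \<Longrightarrow> sup a b = sup c b \<Longrightarrow> a = c"
  shows "sup (sup (inf x y) (inf y z)) (inf z x) = inf (inf (sup x y) (sup y z)) (sup z x)"
proof -
  have modular: "sup a (inf b c) = inf (sup a b) c" if "a \<le> c" for a b c :: 'a
    using cancel that by (rule cancellative_imp_modular)
  define d where "d = sup (sup (inf x y) (inf y z)) (inf z x)"
  define e where "e = inf (inf (sup x y) (sup y z)) (sup z x)"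
  have d': "d = sup (sup (inf x z) (inf z y)) (inf y x)" "d = sup (sup (inf y z) (inf z x)) (inf x y)"
    unfolding d_def by (simp_all add: inf_commute sup_aci)
  have e': "e = inf (inf (sup x z) (sup z y)) (sup y x)" "e = inf (inf (sup y z) (sup z x)) (sup x y)"
    unfolding e_def by (simp_all add: sup_commute inf_aci)
  have "sup d (inf x e) = sup d (inf y e)"
  proof (rule cancel[where b = "sup d (inf z e)"])
    show "inf (sup d (inf x e)) (sup d (inf z e)) = inf (sup d (inf y e)) (sup d (inf z e))"
      using modular_diamond_inf[OF modular d'(1) e'(1)] modular_diamond_inf[OF modular d'(2) e'(2)]
      by simp
    show "sup (sup d (inf x e)) (sup d (inf z e)) = sup (sup d (inf y e)) (sup d (inf z e))"
      using modular_diamond_sup[OF modular d'(1) e'(1)] modular_diamond_sup[OF modular d'(2) e'(2)]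
      by simp
  qed
  then have "d = e"
    using modular_diamond_inf[OF modular d_def e_def] modular_diamond_sup[OF modular d_def e_def]
    by simp
  then show ?thesis
    unfolding d_def e_def .
qed

lemma cancellative_imp_distrib:
  assumes cancel: "\<And>a b c :: 'a::lattice. inf a b = inf c b \<Longrightarrow> sup a b = sup c b \<Longrightarrow> a = c"
  shows "class.distrib_lattice inf (\<le>) (<) (sup :: 'a \<Rightarrow> 'a \<Rightarrow> 'a)"
proof -
  have modular: "sup a (inf b c) = inf (sup a b) c" if "a \<le> c" for a b c :: 'a
    using cancel that by (rule cancellative_imp_modular)
  have "sup x (inf y z) = inf (sup x y) (sup x z)" for x y z :: 'a
  proof -
    have "sup x (inf y z) = sup x (sup (sup (inf x y) (inf y z)) (inf z x))"
      by (metis inf_sup_aci(1) sup.commute sup_assoc sup_inf_absorb)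
    also have "\<dots> = sup x (inf (inf (sup x y) (sup y z)) (sup z x))"
      by (simp only: cancellative_median_eq[OF cancel])
    also have "\<dots> = sup x (inf (sup y z) (inf (sup x y) (sup z x)))"
      by (simp add: inf_aci)
    also have "\<dots> = inf (sup x (sup y z)) (inf (sup x y) (sup z x))"
      by (rule modular) (simp add: le_infI1)
    also have "\<dots> = inf (sup x y) (sup x z)"
      by (metis inf.absorb2 inf_le1 inf_sup_aci(6) le_supI1 sup_commute)
    finally show ?thesis .
  qed
  then show ?thesis
    by unfold_locales blast
qed

section \<open>Join-prime elements of finite distributive lattices\<close>

definition join_prime :: "'a::lattice \<Rightarrow> bool" where
  "join_prime p \<longleftrightarrow> (\<forall>a b. p \<le> sup a b \<longrightarrow> p \<le> a \<or> p \<le> b)"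

lemma join_prime_le_sup_iff: "join_prime p \<Longrightarrow> p \<le> sup a b \<longleftrightarrow> p \<le> a \<or> p \<le> b"
  unfolding join_prime_def by (meson le_supI1 le_supI2)

lemma join_prime_separates:
  fixes a b :: "'a::{lattice,finite}"
  assumes distrib: "\<And>x y z::'a. inf x (sup y z) = sup (inf x y) (inf x z)"
    and "\<not> a \<le> b"
  shows "\<exists>p. join_prime p \<and> p \<le> a \<and> \<not> p \<le> b"
  using assms(2)
proof (induction "card {z. z < a}" arbitrary: a rule: less_induct)
  case less
  show ?case
  proof (cases "join_prime a")
    case True
    then show ?thesis
      using less.prems by auto
  next
    case False
    then obtain c d where cd: "a \<le> sup c d" "\<not> a \<le> c" "\<not> a \<le> d"
      unfolding join_prime_def by auto
    have below: "inf a c < a" "inf a d < a"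
      using cd(2,3) by (auto simp: less_le_not_le)
    have fewer: "card {z. z < w} < card {z. z < a}" if "w < a" for w
      by (rule psubset_card_mono) (use that in \<open>auto dest: order.strict_trans\<close>)
    have "a = sup (inf a c) (inf a d)"
      using distrib[of a c d] cd(1) by (simp add: inf_absorb1)
    then have "\<not> inf a c \<le> b \<or> \<not> inf a d \<le> b"
      using less.prems by (metis le_supI)
    then show ?thesis
      using less.hyps[OF fewer[OF below(1)]] less.hyps[OF fewer[OF below(2)]] below
      by (meson order.strict_implies_order order_trans)
  qed
qed

lemma eq_if_same_join_primes_below:
  fixes a b :: "'a::{lattice,finite}"
  assumes distrib: "\<And>x y z::'a. inf x (sup y z) = sup (inf x y) (inf x z)"
    and "\<And>p. join_prime p \<Longrightarrow> p \<le> a \<longleftrightarrow> p \<le> b"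
  shows "a = b"
  using join_prime_separates[OF distrib, of a b] join_prime_separates[OF distrib, of b a] assms(2)
  by (meson order.antisym)

definition jp_rank :: "'a::lattice \<Rightarrow> nat" where
  "jp_rank z = card {p. join_prime p \<and> p \<le> z}"

lemma jp_rank_strict_mono:
  fixes a b :: "'a::{lattice,finite}"
  assumes distrib: "\<And>x y z::'a. inf x (sup y z) = sup (inf x y) (inf x z)"
    and "a < b"
  shows "jp_rank a < jp_rank b"
proof -
  obtain p where p: "join_prime p" "p \<le> b" "\<not> p \<le> a"
    using join_prime_separates[OF distrib, of b a] \<open>a < b\<close> by (auto simp: less_le_not_le)
  have "{p. join_prime p \<and> p \<le> a} \<subseteq> {p. join_prime p \<and> p \<le> b}"
    using \<open>a < b\<close> by (auto intro: order.trans less_imp_le)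
  then have "{p. join_prime p \<and> p \<le> a} \<subset> {p. join_prime p \<and> p \<le> b}"
    using p by blast
  then show ?thesis
    unfolding jp_rank_def by (rule psubset_card_mono[rotated]) simp
qed

lemma jp_rank_sup_inf:
  fixes a b :: "'a::{lattice,finite}"
  shows "jp_rank (sup a b) + jp_rank (inf a b) = jp_rank a + jp_rank b"
proof -
  have "{p. join_prime p \<and> p \<le> sup a b}
      = {p. join_prime p \<and> p \<le> a} \<union> {p. join_prime p \<and> p \<le> b}"
    using join_prime_le_sup_iff by blast
  moreover have "{p. join_prime p \<and> p \<le> inf a b}
      = {p. join_prime p \<and> p \<le> a} \<inter> {p. join_prime p \<and> p \<le> b}"
    by auto
  moreover have "card ({p. join_prime p \<and> p \<le> a} \<union> {p. join_prime p \<and> p \<le> b})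
      + card ({p. join_prime p \<and> p \<le> a} \<inter> {p. join_prime p \<and> p \<le> b})
      = card {p. join_prime p \<and> p \<le> a} + card {p. join_prime p \<and> p \<le> b}"
    by (rule card_Un_Int[symmetric]) auto
  ultimately show ?thesis
    unfolding jp_rank_def by simp
qed

lemma jp_rank_le_card: "jp_rank (z::'a::{lattice,finite}) \<le> card (UNIV :: 'a set)"
  unfolding jp_rank_def by (rule card_mono) auto

definition count_above :: "'a::order \<Rightarrow> 'a multiset \<Rightarrow> nat" where
  "count_above p m = size (filter_mset (\<lambda>z. p \<le> z) m)"

lemma count_above_add_mset:
  "count_above p (add_mset z m) = count_above p m + (if p \<le> z then 1 else 0)"
  by (simp add: count_above_def)

lemma count_above_swap:
  fixes a b :: "'a::lattice"
  assumes "join_prime p"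
  shows "count_above p {#a, b#} = count_above p {#sup a b, inf a b#}"
  using join_prime_le_sup_iff[OF assms, of a b] by (simp add: count_above_def)

definition mset_chain :: "'a::order multiset \<Rightarrow> bool" where
  "mset_chain m \<longleftrightarrow> (\<forall>u\<in>#m. \<forall>v\<in>#m. u \<le> v \<or> v \<le> u)"

lemma mset_chain_has_greatest:
  assumes "mset_chain m" "m \<noteq> {#}"
  obtains c where "c \<in># m" "\<forall>z\<in>#m. z \<le> c"
proof -
  obtain c where c: "c \<in># m" "\<forall>b\<in>#m. c \<le> b \<longrightarrow> c = b"
    using finite_has_maximal[of "set_mset m"] assms(2) by auto
  then have "\<forall>z\<in>#m. z \<le> c"
    using assms(1) unfolding mset_chain_def by metis
  with c(1) show ?thesis
    using that by blast
qed

lemma mset_chain_subset: "mset_chain m \<Longrightarrow> n \<subseteq># m \<Longrightarrow> mset_chain n"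
  unfolding mset_chain_def by (meson mset_subset_eqD)

lemma mset_chain_eq_if_count_above_eq:
  fixes m1 m2 :: "'a::{lattice,finite} multiset"
  assumes distrib: "\<And>x y z::'a. inf x (sup y z) = sup (inf x y) (inf x z)"
  shows "mset_chain m1 \<Longrightarrow> mset_chain m2 \<Longrightarrow> size m1 = size m2 \<Longrightarrow>
    (\<And>p. join_prime p \<Longrightarrow> count_above p m1 = count_above p m2) \<Longrightarrow> m1 = m2"
proof (induction "size m1" arbitrary: m1 m2)
  case 0
  then show ?case
    by simp
next
  case (Suc k)
  then have "m1 \<noteq> {#}" "m2 \<noteq> {#}"
    by auto
  obtain c where c: "c \<in># m1" "\<forall>z\<in>#m1. z \<le> c"
    using mset_chain_has_greatest[OF Suc.prems(1) \<open>m1 \<noteq> {#}\<close>] by blast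
  obtain d where d: "d \<in># m2" "\<forall>z\<in>#m2. z \<le> d"
    using mset_chain_has_greatest[OF Suc.prems(2) \<open>m2 \<noteq> {#}\<close>] by blast
  have count_pos: "count_above p m \<noteq> 0 \<longleftrightarrow> p \<le> t" if "t \<in># m" "\<forall>z\<in>#m. z \<le> t"
    for p t and m :: "'a multiset"
  proof -
    have "count_above p m \<noteq> 0 \<longleftrightarrow> (\<exists>z\<in>#m. p \<le> z)"
      unfolding count_above_def by (auto simp: size_eq_0_iff_empty)
    then show ?thesis
      using that by (meson order.trans)
  qed
  have "c = d"
  proof (rule eq_if_same_join_primes_below[OF distrib])
    fix p :: 'a
    assume "join_prime p"
    then show "p \<le> c \<longleftrightarrow> p \<le> d"
      using count_pos[OF c, of p] count_pos[OF d, of p] Suc.prems(4) by simp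
  qed
  define n1 where "n1 = m1 - {#c#}"
  define n2 where "n2 = m2 - {#c#}"
  have m1: "m1 = add_mset c n1" and m2: "m2 = add_mset c n2"
    unfolding n1_def n2_def using c(1) d(1) \<open>c = d\<close> by simp_all
  have "n1 = n2"
  proof (rule Suc.hyps)
    show "k = size n1" "size n1 = size n2"
      using Suc.hyps(2) Suc.prems(3) m1 m2 by simp_all
    show "mset_chain n1" "mset_chain n2"
      using mset_chain_subset[OF Suc.prems(1)] mset_chain_subset[OF Suc.prems(2)]
      unfolding n1_def n2_def by simp_all
    show "count_above p n1 = count_above p n2" if "join_prime p" for p
      using Suc.prems(4)[OF that] m1 m2 by (simp add: count_above_add_mset)
  qed
  then show ?case
    using m1 m2 by simp
qed

lemma sum_squares_less:
  fixes A B U V :: nat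
  assumes "A + B = U + V" "U < A" "V < A"
  shows "U^2 + V^2 < A^2 + B^2"
proof -
  have B: "int B = int U + int V - int A"
    using assms(1) by linarith
  have "int A^2 + int B^2 - int U^2 - int V^2 = 2 * (int A - int U) * (int A - int V)"
    unfolding B by (simp add: algebra_simps power2_eq_square)
  moreover have "0 < 2 * (int A - int U) * (int A - int V)"
    using assms(2,3) by simp
  ultimately have "int (U^2 + V^2) < int (A^2 + B^2)"
    by simp
  then show ?thesis
    by linarith
qed

definition rank_square_sum :: "'a::lattice multiset \<Rightarrow> nat" where
  "rank_square_sum m = (\<Sum>z\<in>#m. jp_rank z ^ 2)"

lemma rank_square_sum_le:
  "rank_square_sum (m :: 'a::{lattice,finite} multiset) \<le> size m * card (UNIV :: 'a set) ^ 2"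
proof (induction m)
  case empty
  then show ?case
    by (simp add: rank_square_sum_def)
next
  case (add x m)
  have "jp_rank x ^ 2 \<le> card (UNIV :: 'a set) ^ 2"
    using jp_rank_le_card[of x] by (simp add: power_mono)
  from add_mono[OF this add.IH] show ?case
    by (simp add: rank_square_sum_def)
qed

lemma rank_square_sum_swap_less:
  fixes u v :: "'a::{lattice,finite}"
  assumes distrib: "\<And>x y z::'a. inf x (sup y z) = sup (inf x y) (inf x z)"
    and "\<not> u \<le> v" "\<not> v \<le> u"
  shows "rank_square_sum (r + {#u, v#}) < rank_square_sum (r + {#sup u v, inf u v#})"
proof -
  have "u < sup u v" "v < sup u v"
    using assms(2,3) by (auto simp: less_le_not_le)
  then have "jp_rank u ^ 2 + jp_rank v ^ 2 < jp_rank (sup u v) ^ 2 + jp_rank (inf u v) ^ 2"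
    by (intro sum_squares_less) (use jp_rank_sup_inf[of u v] jp_rank_strict_mono[OF distrib] in auto)
  then show ?thesis
    by (simp add: rank_square_sum_def)
qed

section \<open>Ideals of K[L] containing I_L\<close>

definition is_ideal :: "'r::comm_ring_1 set \<Rightarrow> bool" where
  "is_ideal T \<longleftrightarrow> 0 \<in> T \<and> (\<forall>x\<in>T. \<forall>y\<in>T. x + y \<in> T) \<and> (\<forall>r. \<forall>x\<in>T. r * x \<in> T)"

lemma is_ideal_zero: "is_ideal T \<Longrightarrow> 0 \<in> T"
  by (simp add: is_ideal_def)

lemma is_ideal_add: "is_ideal T \<Longrightarrow> x \<in> T \<Longrightarrow> y \<in> T \<Longrightarrow> x + y \<in> T"
  by (simp add: is_ideal_def)

lemma is_ideal_mult_left: "is_ideal T \<Longrightarrow> x \<in> T \<Longrightarrow> r * x \<in> T"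
  by (simp add: is_ideal_def)

lemma is_ideal_mult_right: "is_ideal T \<Longrightarrow> x \<in> T \<Longrightarrow> x * r \<in> T"
  by (simp add: is_ideal_def mult.commute)

lemma is_ideal_diff: "is_ideal T \<Longrightarrow> x \<in> T \<Longrightarrow> y \<in> T \<Longrightarrow> x - y \<in> T"
  using is_ideal_add[of T x "(-1) * y"] is_ideal_mult_left[of T y "-1"] by simp

lemma is_ideal_sum: "is_ideal T \<Longrightarrow> (\<And>i. i \<in> A \<Longrightarrow> f i \<in> T) \<Longrightarrow> sum f A \<in> T"
  by (induction A rule: infinite_finite_induct) (auto simp: is_ideal_def)

lemma is_ideal_colon: "is_ideal J \<Longrightarrow> is_ideal (colon J I)"
  unfolding is_ideal_def colon_def by (auto simp: distrib_right mult.assoc)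

lemma is_ideal_gen_ideal: "is_ideal (gen_ideal S)"
  unfolding is_ideal_def
proof (intro conjI ballI allI)
  show "0 \<in> gen_ideal S"
    unfolding gen_ideal_def by (intro CollectI exI[of _ "{}"]) simp
next
  fix x y assume "x \<in> gen_ideal S" "y \<in> gen_ideal S"
  then obtain A1 c1 A2 c2 where A: "finite A1" "A1 \<subseteq> S" "x = (\<Sum>s\<in>A1. c1 s * s)"
    "finite A2" "A2 \<subseteq> S" "y = (\<Sum>s\<in>A2. c2 s * s)"
    unfolding gen_ideal_def by blast
  define c where "c s = (if s \<in> A1 then c1 s else 0) + (if s \<in> A2 then c2 s else 0)" for s
  have split: "c s * s = (if s \<in> A1 then c1 s * s else 0) + (if s \<in> A2 then c2 s * s else 0)" for s
    unfolding c_def by (simp add: distrib_right)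
  have "(\<Sum>s\<in>A1 \<union> A2. c s * s)
      = (\<Sum>s\<in>A1 \<union> A2. if s \<in> A1 then c1 s * s else 0)
        + (\<Sum>s\<in>A1 \<union> A2. if s \<in> A2 then c2 s * s else 0)"
    unfolding split by (rule sum.distrib)
  also have "\<dots> = x + y"
    using A by (simp add: sum.If_cases Int_absorb1 Int_absorb2)
  finally show "x + y \<in> gen_ideal S"
    unfolding gen_ideal_def using A by (intro CollectI exI[of _ "A1 \<union> A2"] exI[of _ c]) auto
next
  fix r x assume "x \<in> gen_ideal S"
  then obtain A c where A: "finite A" "A \<subseteq> S" "x = (\<Sum>s\<in>A. c s * s)"
    unfolding gen_ideal_def by blast
  then have "r * x = (\<Sum>s\<in>A. (r * c s) * s)"
    by (simp add: sum_distrib_left mult.assoc)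
  then show "r * x \<in> gen_ideal S"
    unfolding gen_ideal_def using A by (intro CollectI exI[of _ A] exI[of _ "\<lambda>s. r * c s"]) simp
qed

lemma gen_ideal_superset: "S \<subseteq> gen_ideal S"
proof
  fix s assume "s \<in> S"
  then show "s \<in> gen_ideal S"
    unfolding gen_ideal_def by (intro CollectI exI[of _ "{s}"] exI[of _ "\<lambda>_. 1"]) auto
qed

lemma gen_ideal_least:
  assumes "S \<subseteq> T" "is_ideal T"
  shows "gen_ideal S \<subseteq> T"
proof
  fix f assume "f \<in> gen_ideal S"
  then obtain A c where A: "finite A" "A \<subseteq> S" "f = (\<Sum>s\<in>A. c s * s)"
    unfolding gen_ideal_def by blast
  show "f \<in> T"
    unfolding A(3) using A(2) assms by (intro is_ideal_sum[OF assms(2)] is_ideal_mult_left) auto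
qed

lemma gen_ideal_mono: "S \<subseteq> T \<Longrightarrow> gen_ideal S \<subseteq> gen_ideal T"
  by (meson gen_ideal_least gen_ideal_superset is_ideal_gen_ideal order_trans)

lemma gen_ideal_Un_gen_ideal: "gen_ideal (gen_ideal S \<union> T) = gen_ideal (S \<union> T)"
proof (rule subset_antisym)
  show "gen_ideal (gen_ideal S \<union> T) \<subseteq> gen_ideal (S \<union> T)"
    by (intro gen_ideal_least is_ideal_gen_ideal Un_least)
      (auto intro: gen_ideal_mono[THEN subsetD] gen_ideal_superset[THEN subsetD])
  show "gen_ideal (S \<union> T) \<subseteq> gen_ideal (gen_ideal S \<union> T)"
    by (intro gen_ideal_mono) (use gen_ideal_superset in auto)
qed

lemma is_ideal_hibi_ideal: "is_ideal hibi_ideal"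
  unfolding hibi_ideal_def by (rule is_ideal_gen_ideal)

lemma is_ideal_gen_R: "is_ideal (gen_R T)"
  unfolding gen_R_def by (rule is_ideal_gen_ideal)

lemma gen_R_superset: "T \<subseteq> gen_R T"
  unfolding gen_R_def using gen_ideal_superset by blast

lemma hibi_ideal_subset_gen_R: "hibi_ideal \<subseteq> gen_R T"
  unfolding gen_R_def using gen_ideal_superset by blast

lemma gen_R_mono: "S \<subseteq> T \<Longrightarrow> gen_R S \<subseteq> gen_R T"
  unfolding gen_R_def by (intro gen_ideal_mono) auto

lemma gen_R_least: "T \<subseteq> I \<Longrightarrow> hibi_ideal \<subseteq> I \<Longrightarrow> is_ideal I \<Longrightarrow> gen_R T \<subseteq> I"
  unfolding gen_R_def by (intro gen_ideal_least) auto

lemma gen_R_empty: "gen_R {} = hibi_ideal"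
  unfolding gen_R_def hibi_ideal_def
  by (simp add: gen_ideal_least gen_ideal_superset is_ideal_gen_ideal subset_antisym)

lemma gen_R_eq_gen_ideal_basic_binomials: "gen_R T = gen_ideal (basic_binomials \<union> T)"
  unfolding gen_R_def hibi_ideal_def by (rule gen_ideal_Un_gen_ideal)

lemma gen_R_Un_gen_R: "gen_R (gen_R S \<union> T) = gen_R (S \<union> T)"
proof -
  have "hibi_ideal \<union> (gen_ideal (hibi_ideal \<union> S) \<union> T)
      = gen_ideal (hibi_ideal \<union> S) \<union> (hibi_ideal \<union> T)"
    by blast
  moreover have "hibi_ideal \<union> S \<union> (hibi_ideal \<union> T) = hibi_ideal \<union> (S \<union> T)"
    by blast
  ultimately show ?thesis
    unfolding gen_R_def by (simp only: gen_ideal_Un_gen_ideal)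
qed

lemma gen_R_insert_elim:
  assumes J: "is_ideal J" "hibi_ideal \<subseteq> J" and h: "h \<in> gen_R (J \<union> {f})"
  obtains j r where "j \<in> J" "h = j + r * f"
proof -
  define T where "T = {h. \<exists>j\<in>J. \<exists>r. h = j + r * f}"
  have "is_ideal T"
    unfolding is_ideal_def
  proof (intro conjI ballI allI)
    show "0 \<in> T"
      unfolding T_def using is_ideal_zero[OF J(1)] by (intro CollectI bexI[of _ 0] exI[of _ 0]) auto
  next
    fix x y assume "x \<in> T" "y \<in> T"
    then obtain j1 r1 j2 r2 where "j1 \<in> J" "x = j1 + r1 * f" "j2 \<in> J" "y = j2 + r2 * f"
      unfolding T_def by blast
    then show "x + y \<in> T"
      unfolding T_def using is_ideal_add[OF J(1)]
      by (intro CollectI bexI[of _ "j1 + j2"] exI[of _ "r1 + r2"]) (auto simp: algebra_simps)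
  next
    fix s x assume "x \<in> T"
    then obtain j r where "j \<in> J" "x = j + r * f"
      unfolding T_def by blast
    then show "s * x \<in> T"
      unfolding T_def using is_ideal_mult_left[OF J(1)]
      by (intro CollectI bexI[of _ "s * j"] exI[of _ "s * r"]) (auto simp: algebra_simps)
  qed
  moreover have "J \<subseteq> T"
  proof
    fix x assume "x \<in> J"
    then show "x \<in> T"
      unfolding T_def by (intro CollectI bexI[of _ x] exI[of _ 0]) simp_all
  qed
  moreover have "f \<in> T"
    unfolding T_def using is_ideal_zero[OF J(1)] by (intro CollectI bexI[of _ 0] exI[of _ 1]) auto
  ultimately have "gen_R (J \<union> {f}) \<subseteq> T"
    using J(2) by (intro gen_R_least) auto
  then show ?thesis
    using h that unfolding T_def by blast
qed

lemma colon_gen_R_memI: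
  assumes J: "is_ideal J" "hibi_ideal \<subseteq> J" and gens: "\<And>t. t \<in> T \<Longrightarrow> g * t \<in> J"
  shows "g \<in> colon J (gen_R T)"
proof -
  have "is_ideal {h. g * h \<in> J}"
    using J(1) unfolding is_ideal_def by (auto simp: distrib_left mult.left_commute)
  moreover have "hibi_ideal \<subseteq> {h. g * h \<in> J}"
    using J(2) is_ideal_mult_left[OF is_ideal_hibi_ideal, of _ g] by auto
  ultimately have "gen_R T \<subseteq> {h. g * h \<in> J}"
    using gens by (intro gen_R_least) auto
  then show ?thesis
    unfolding colon_def by blast
qed

section \<open>Coefficient functionals\<close>

lemma lookup_mult_single:
  fixes c :: "('a multiset \<Rightarrow>\<^sub>0 'k::comm_ring_1)"
  shows "Poly_Mapping.lookup (c * Poly_Mapping.single n d) m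
    = (if n \<subseteq># m then Poly_Mapping.lookup c (m - n) * d else 0)"
proof -
  have inner: "(\<Sum>q. (d when n = q) when m = l + q) = (d when m = l + n)" for l
  proof -
    have "(\<lambda>q. (d when n = q) when m = l + q) = (\<lambda>q. (d when m = l + n) when n = q)"
      by (auto simp: when_def fun_eq_iff)
    then show ?thesis
      by (simp only: Sum_any_when_equal')
  qed
  have "Poly_Mapping.lookup (c * Poly_Mapping.single n d) m
      = (\<Sum>l. Poly_Mapping.lookup c l * (d when m = l + n))"
    unfolding lookup_mult lookup_single inner ..
  also have "\<dots> = (\<Sum>l. (Poly_Mapping.lookup c l * d) when l = m - n \<and> n \<subseteq># m)"
    by (rule Sum_any.cong) (auto simp: when_def)
  also have "\<dots> = (if n \<subseteq># m then Poly_Mapping.lookup c (m - n) * d else 0)"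
    by (auto simp: when_def)
  finally show ?thesis .
qed

lemma poly_mapping_sum_single:
  "g = (\<Sum>m\<in>Poly_Mapping.keys g. Poly_Mapping.single m (Poly_Mapping.lookup g m))"
  by (rule poly_mapping_eqI) (simp add: lookup_sum lookup_single when_def in_keys_iff)

definition coeff_sum :: "'a multiset set \<Rightarrow> ('a, 'k::comm_ring_1) lpoly \<Rightarrow> 'k" where
  "coeff_sum S h = (\<Sum>m\<in>S. Poly_Mapping.lookup h m)"

lemma coeff_sum_singleton: "coeff_sum {m} h = Poly_Mapping.lookup h m"
  by (simp add: coeff_sum_def)

lemma coeff_sum_diff: "coeff_sum S (x - y) = coeff_sum S x - coeff_sum S y"
  by (simp add: coeff_sum_def lookup_minus sum_subtractf)

lemma coeff_sum_single_one:
  "finite S \<Longrightarrow> coeff_sum S (Poly_Mapping.single n 1) = (if n \<in> S then 1 else 0)"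
  by (simp add: coeff_sum_def lookup_single when_def)

lemma coeff_sum_mult_single:
  assumes "finite S"
  shows "coeff_sum S (c * Poly_Mapping.single n d) = coeff_sum {r. r + n \<in> S} c * d"
proof -
  have "coeff_sum S (c * Poly_Mapping.single n d)
      = (\<Sum>m\<in>{m\<in>S. n \<subseteq># m}. Poly_Mapping.lookup c (m - n) * d)"
    unfolding coeff_sum_def lookup_mult_single using assms by (simp add: sum.inter_filter)
  also have "{m\<in>S. n \<subseteq># m} = (\<lambda>r. r + n) ` {r. r + n \<in> S}"
    by (auto simp: image_iff) (metis subset_mset.diff_add)
  also have "(\<Sum>m\<in>(\<lambda>r. r + n) ` {r. r + n \<in> S}. Poly_Mapping.lookup c (m - n) * d)
      = (\<Sum>r\<in>{r. r + n \<in> S}. Poly_Mapping.lookup c r * d)"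
    by (subst sum.reindex) (auto simp: inj_on_def)
  finally show ?thesis
    by (simp add: coeff_sum_def sum_distrib_right)
qed

lemma coeff_sum_gen_ideal_eq_0:
  assumes "\<And>c s. s \<in> G \<Longrightarrow> coeff_sum S (c * s) = 0" and "f \<in> gen_ideal G"
  shows "coeff_sum S f = 0"
proof -
  obtain A c where A: "finite A" "A \<subseteq> G" "f = (\<Sum>s\<in>A. c s * s)"
    using assms(2) unfolding gen_ideal_def by blast
  have "coeff_sum S f = (\<Sum>s\<in>A. coeff_sum S (c s * s))"
    unfolding A(3) coeff_sum_def lookup_sum by (rule sum.swap)
  also have "\<dots> = 0"
    using A assms(1) by (auto intro: sum.neutral)
  finally show ?thesis .
qed

definition hibi_binomial :: "'a::lattice \<Rightarrow> 'a \<Rightarrow> ('a, 'k::comm_ring_1) lpoly" where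
  "hibi_binomial a b = var a * var b - var (sup a b) * var (inf a b)"

lemma var_mult_var: "var a * var b = Poly_Mapping.single {#a, b#} (1::'k::comm_ring_1)"
  by (simp add: var_def mult_single add_mset_commute)

lemma hibi_binomial_mem: "(hibi_binomial a b :: ('a::lattice, 'k::comm_ring_1) lpoly) \<in> hibi_ideal"
proof (cases "a \<le> b \<or> b \<le> a")
  case True
  then have "hibi_binomial a b = (0 :: ('a, 'k) lpoly)"
    by (auto simp: hibi_binomial_def sup_absorb1 sup_absorb2 inf_absorb1 inf_absorb2 mult.commute)
  then show ?thesis
    using is_ideal_zero[OF is_ideal_hibi_ideal] by simp
next
  case False
  then have "hibi_binomial a b \<in> basic_binomials"
    unfolding basic_binomials_def hibi_binomial_def by blast
  then show ?thesis
    unfolding hibi_ideal_def by (rule gen_ideal_superset[THEN subsetD])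
qed

lemma single_mem_gen_R_var:
  assumes "y \<in># m" "y \<in> A"
  shows "Poly_Mapping.single m c \<in> gen_R (var ` A)"
proof -
  have "Poly_Mapping.single m c = Poly_Mapping.single (m - {#y#}) c * var y"
    using assms(1) by (simp add: var_def mult_single)
  moreover have "var y \<in> gen_R (var ` A)"
    using assms(2) gen_R_superset by blast
  ultimately show ?thesis
    using is_ideal_mult_left[OF is_ideal_gen_R] by simp
qed

lemma coeff_sum_gen_R_var_eq_0:
  fixes S :: "'a::lattice multiset set"
  assumes fin: "finite S"
    and swap: "\<And>a b r. \<not> a \<le> b \<Longrightarrow> \<not> b \<le> a \<Longrightarrow>
      r + {#a, b#} \<in> S \<longleftrightarrow> r + {#sup a b, inf a b#} \<in> S"
    and avoid: "\<And>y r. y \<in> Y \<Longrightarrow> r + {#y#} \<notin> S"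
    and f: "f \<in> gen_R (var ` Y)"
  shows "coeff_sum S (f :: ('a, 'k::comm_ring_1) lpoly) = 0"
proof (rule coeff_sum_gen_ideal_eq_0[OF _ f[unfolded gen_R_eq_gen_ideal_basic_binomials]])
  fix c s :: "('a, 'k) lpoly"
  assume "s \<in> basic_binomials \<union> var ` Y"
  then consider a b where "s = hibi_binomial a b" "\<not> a \<le> b" "\<not> b \<le> a"
    | y where "y \<in> Y" "s = var y"
    unfolding basic_binomials_def hibi_binomial_def by auto
  then show "coeff_sum S (c * s) = 0"
  proof cases
    case 1
    then show ?thesis
      using swap[OF 1(2,3)] fin
      by (simp add: hibi_binomial_def var_mult_var right_diff_distrib coeff_sum_diff
          coeff_sum_mult_single)
  next
    case 2
    have "{r. r + {#y#} \<in> S} = {}"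
      using avoid[OF 2(1)] by auto
    then show ?thesis
      using 2 fin by (simp add: var_def coeff_sum_mult_single coeff_sum_def[of "{}"])
  qed
qed

lemma lookup_singleton_gen_R_var:
  assumes "h \<in> gen_R (var ` A)" "z \<notin> A"
  shows "Poly_Mapping.lookup h {#z#} = 0"
proof -
  have "coeff_sum {{#z#}} h = 0"
    by (rule coeff_sum_gen_R_var_eq_0[OF _ _ _ assms(1)])
      (use assms(2) in \<open>auto dest: arg_cong[of _ _ size] simp: add_mset_eq_single\<close>)
  then show ?thesis
    by (simp add: coeff_sum_singleton)
qed

lemma lookup_empty_gen_R_var:
  assumes "h \<in> gen_R (var ` A)"
  shows "Poly_Mapping.lookup h {#} = 0"
proof -
  have "coeff_sum {{#}} h = 0"
    by (rule coeff_sum_gen_R_var_eq_0[OF _ _ _ assms]) auto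
  then show ?thesis
    by (simp add: coeff_sum_singleton)
qed

lemma var_mem_gen_R_var_iff:
  "(var z :: ('a::lattice, 'k::comm_ring_1) lpoly) \<in> gen_R (var ` A) \<longleftrightarrow> z \<in> A"
  using lookup_singleton_gen_R_var[of "var z" A z] gen_R_superset[of "var ` A"]
  by (auto simp: var_def)

lemma one_not_mem_gen_R_var: "(1 :: ('a::lattice, 'k::comm_ring_1) lpoly) \<notin> gen_R (var ` A)"
  using lookup_empty_gen_R_var[of "1 :: ('a, 'k) lpoly" A] by (auto simp: lookup_one)

section \<open>Straightening\<close>

lemma single_swap_congruent:
  "Poly_Mapping.single (r + {#u, v#}) (1::'k::comm_ring_1) - Poly_Mapping.single (r + {#sup u v, inf u v#}) 1
    \<in> (hibi_ideal :: ('a::lattice, 'k) lpoly set)"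
proof -
  have "Poly_Mapping.single (r + {#u, v#}) (1::'k) - Poly_Mapping.single (r + {#sup u v, inf u v#}) 1
      = Poly_Mapping.single r 1 * hibi_binomial u v"
    unfolding hibi_binomial_def var_mult_var by (simp add: right_diff_distrib mult_single)
  then show ?thesis
    using is_ideal_mult_left[OF is_ideal_hibi_ideal hibi_binomial_mem] by simp
qed

text \<open>Straightening terminates since the bounded sum of squared ranks strictly increases with
  each swap.\<close>

lemma exists_chain_congruent:
  fixes m :: "'a::{lattice,finite} multiset"
  assumes distrib: "\<And>x y z::'a. inf x (sup y z) = sup (inf x y) (inf x z)"
  shows "\<exists>m'. mset_chain m' \<and>
    Poly_Mapping.single m (1::'k::comm_ring_1) - Poly_Mapping.single m' 1 \<in> hibi_ideal"
proof (induction "size m * card (UNIV :: 'a set) ^ 2 - rank_square_sum m" arbitrary: m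
    rule: less_induct)
  case less
  show ?case
  proof (cases "mset_chain m")
    case True
    then show ?thesis
      using is_ideal_zero[OF is_ideal_hibi_ideal] by (intro exI[of _ m]) auto
  next
    case False
    then obtain u v where uv: "u \<in># m" "v \<in># m" "\<not> u \<le> v" "\<not> v \<le> u"
      unfolding mset_chain_def by blast
    obtain m1 where m1: "m = add_mset u m1"
      using uv(1) by (metis multi_member_split)
    have "v \<in># m1"
      using uv(2,3) m1 by auto
    define r where "r = m1 - {#v#}"
    have m: "m = r + {#u, v#}"
      unfolding r_def m1 using \<open>v \<in># m1\<close> by simp
    define m2 where "m2 = r + {#sup u v, inf u v#}"
    have increase: "rank_square_sum m < rank_square_sum m2" and size: "size m2 = size m"
      unfolding m m2_def using rank_square_sum_swap_less[OF distrib uv(3,4)] by simp_all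
    have "rank_square_sum m2 \<le> size m * card (UNIV :: 'a set) ^ 2"
      using rank_square_sum_le[of m2] size by simp
    then have "size m2 * card (UNIV :: 'a set) ^ 2 - rank_square_sum m2
        < size m * card (UNIV :: 'a set) ^ 2 - rank_square_sum m"
      unfolding size using increase by linarith
    then obtain m' where m': "mset_chain m'"
      "Poly_Mapping.single m2 (1::'k) - Poly_Mapping.single m' 1 \<in> hibi_ideal"
      using less.hyps by blast
    have "Poly_Mapping.single m (1::'k) - Poly_Mapping.single m' 1 =
      (Poly_Mapping.single m 1 - Poly_Mapping.single m2 1) + (Poly_Mapping.single m2 1 - Poly_Mapping.single m' 1)"
      by simp
    also have "\<dots> \<in> hibi_ideal"
      using is_ideal_add[OF is_ideal_hibi_ideal single_swap_congruent m'(2)] unfolding m m2_def .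
    finally show ?thesis
      using m' by blast
  qed
qed

lemma exists_chain_supported_congruent:
  fixes g :: "('a::{lattice,finite}, 'k::comm_ring_1) lpoly"
  assumes distrib: "\<And>x y z::'a. inf x (sup y z) = sup (inf x y) (inf x z)"
  shows "\<exists>h. g - h \<in> hibi_ideal \<and> (\<forall>m\<in>Poly_Mapping.keys h. mset_chain m)"
proof -
  have "\<forall>m :: 'a multiset. \<exists>m'. mset_chain m' \<and>
      Poly_Mapping.single m (1::'k) - Poly_Mapping.single m' 1 \<in> hibi_ideal"
    using exists_chain_congruent[OF distrib] by blast
  then obtain ch :: "'a multiset \<Rightarrow> 'a multiset" where ch: "\<And>m. mset_chain (ch m)"
    "\<And>m. Poly_Mapping.single m (1::'k) - Poly_Mapping.single (ch m) 1 \<in> hibi_ideal"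
    by metis
  define h where "h = (\<Sum>m\<in>Poly_Mapping.keys g. Poly_Mapping.single (ch m) (Poly_Mapping.lookup g m))"
  have "g - h = (\<Sum>m\<in>Poly_Mapping.keys g.
      Poly_Mapping.single 0 (Poly_Mapping.lookup g m) *
        (Poly_Mapping.single m 1 - Poly_Mapping.single (ch m) 1))"
    by (subst (1) poly_mapping_sum_single)
      (simp add: h_def sum_subtractf right_diff_distrib mult_single)
  also have "\<dots> \<in> hibi_ideal"
    by (intro is_ideal_sum[OF is_ideal_hibi_ideal] is_ideal_mult_left[OF is_ideal_hibi_ideal] ch(2))
  finally have "g - h \<in> hibi_ideal" .
  moreover have "Poly_Mapping.keys h \<subseteq> range ch"
    unfolding h_def by (rule order.trans[OF keys_sum]) auto
  ultimately show ?thesis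
    using ch(1) by blast
qed

lemma coeff_sum_count_above_class_eq_0:
  fixes x :: "'a::{lattice,finite}"
  assumes "f \<in> gen_R (var ` {y. \<not> x \<le> y})"
  shows "coeff_sum {m \<in> multisets_of_size {z. x \<le> z} n.
      \<forall>p. join_prime p \<longrightarrow> count_above p m = count_above p m'} (f :: ('a, 'k::comm_ring_1) lpoly) = 0"
proof (rule coeff_sum_gen_R_var_eq_0[OF _ _ _ assms])
  show "finite {m \<in> multisets_of_size {z. x \<le> z} n.
      \<forall>p. join_prime p \<longrightarrow> count_above p m = count_above p m'}"
    by (rule finite_subset[OF _ finite_multisets_of_size[of "{z. x \<le> z}"]]) auto
  fix a b :: 'a and r
  have "x \<le> a \<and> x \<le> b \<longleftrightarrow> x \<le> sup a b \<and> x \<le> inf a b"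
    by (auto intro: le_supI1)
  moreover have "count_above p (r + {#a, b#}) = count_above p (r + {#sup a b, inf a b#})"
    if "join_prime p" for p
    using count_above_swap[OF that, of a b] by (simp add: count_above_add_mset)
  ultimately show "r + {#a, b#} \<in> {m \<in> multisets_of_size {z. x \<le> z} n.
        \<forall>p. join_prime p \<longrightarrow> count_above p m = count_above p m'}
      \<longleftrightarrow> r + {#sup a b, inf a b#} \<in> {m \<in> multisets_of_size {z. x \<le> z} n.
        \<forall>p. join_prime p \<longrightarrow> count_above p m = count_above p m'}"
    unfolding multisets_of_size_def by auto
next
  fix y r
  assume "y \<in> {y. \<not> x \<le> y}"
  then show "r + {#y#} \<notin> {m \<in> multisets_of_size {z. x \<le> z} n.
      \<forall>p. join_prime p \<longrightarrow> count_above p m = count_above p m'}"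
    unfolding multisets_of_size_def by auto
qed

text \<open>Taking for m' the monomial x m0, the functional of the previous lemma sees, among the
  chain monomials, only x m0: a chain monomial is determined by its size and by its counts above
  the join-prime elements.\<close>

lemma upper_chain_combination_eq_0:
  fixes g :: "('a::{lattice,finite}, 'k::comm_ring_1) lpoly"
  assumes distrib: "\<And>x y z::'a. inf x (sup y z) = sup (inf x y) (inf x z)"
    and chains: "\<And>m. m \<in> Poly_Mapping.keys g \<Longrightarrow> mset_chain m \<and> (\<forall>z\<in>#m. x \<le> z)"
    and mem: "g * var x \<in> gen_R (var ` {y. \<not> x \<le> y})"
  shows "g = 0"
proof (rule ccontr)
  assume "g \<noteq> 0"
  then obtain m0 where "Poly_Mapping.lookup g m0 \<noteq> 0"
    by (metis lookup_zero poly_mapping_eqI)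
  then have m0: "m0 \<in> Poly_Mapping.keys g"
    by (simp add: in_keys_iff)
  define S where "S = {m \<in> multisets_of_size {z. x \<le> z} (size m0 + 1).
    \<forall>p. join_prime p \<longrightarrow> count_above p m = count_above p (add_mset x m0)}"
  have finS: "finite S"
    unfolding S_def by (rule finite_subset[OF _ finite_multisets_of_size[of "{z. x \<le> z}"]]) auto
  have support: "{r. add_mset x r \<in> S} \<inter> Poly_Mapping.keys g = {m0}"
  proof -
    have unique: "r = m0" if r: "add_mset x r \<in> S" "r \<in> Poly_Mapping.keys g" for r
    proof (rule mset_chain_eq_if_count_above_eq[OF distrib])
      show "mset_chain r"
        using chains[OF r(2)] by blast
      show "mset_chain m0"
        using chains[OF m0] by blast
      show "size r = size m0"
        using r(1) unfolding S_def multisets_of_size_def by simp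
      show "count_above p r = count_above p m0" if "join_prime p" for p
        using r(1) that unfolding S_def by (simp add: count_above_add_mset)
    qed
    moreover have "add_mset x m0 \<in> S"
      using chains[OF m0] unfolding S_def multisets_of_size_def by auto
    ultimately show ?thesis
      using m0 by blast
  qed
  have "m0 \<in> {r. add_mset x r \<in> S} \<inter> Poly_Mapping.keys g"
    unfolding support by simp
  moreover have "Poly_Mapping.lookup g r = 0" if "r \<in> {r. add_mset x r \<in> S}" "r \<noteq> m0" for r
  proof -
    have "r \<notin> Poly_Mapping.keys g"
      using that support by blast
    then show ?thesis
      by (simp add: in_keys_iff)
  qed
  moreover have "finite {r. add_mset x r \<in> S}"
    using finite_vimageI[OF finS, of "add_mset x"] by (simp add: inj_def vimage_def)
  ultimately have "coeff_sum {r. add_mset x r \<in> S} g = coeff_sum {m0} g"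
    unfolding coeff_sum_def by (intro sum.mono_neutral_right) auto
  moreover have "coeff_sum S (g * var x) = coeff_sum {r. add_mset x r \<in> S} g"
    by (simp add: var_def coeff_sum_mult_single[OF finS])
  moreover have "coeff_sum S (g * var x) = 0"
    unfolding S_def by (rule coeff_sum_count_above_class_eq_0[OF mem])
  ultimately show False
    using m0 by (simp add: coeff_sum_singleton in_keys_iff)
qed

lemma keys_sum_single_subset: "Poly_Mapping.keys (\<Sum>m\<in>M. Poly_Mapping.single m (c m)) \<subseteq> M"
  by (rule order.trans[OF keys_sum]) auto

lemma exists_upper_chain_congruent:
  fixes g :: "('a::{lattice,finite}, 'k::comm_ring_1) lpoly"
  assumes distrib: "\<And>x y z::'a. inf x (sup y z) = sup (inf x y) (inf x z)"
  obtains h where "g - h \<in> gen_R (var ` {y. \<not> x \<le> y})"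
    "\<And>m. m \<in> Poly_Mapping.keys h \<Longrightarrow> mset_chain m \<and> (\<forall>z\<in>#m. x \<le> z)"
proof -
  define Q where "Q = (gen_R (var ` {y. \<not> x \<le> y}) :: ('a, 'k) lpoly set)"
  have Q: "is_ideal Q" "hibi_ideal \<subseteq> Q"
    unfolding Q_def by (rule is_ideal_gen_R, rule hibi_ideal_subset_gen_R)
  obtain h where gh: "g - h \<in> hibi_ideal"
    and chains: "\<And>m. m \<in> Poly_Mapping.keys h \<Longrightarrow> mset_chain m"
    using exists_chain_supported_congruent[OF distrib] by blast
  define P where "P = {m. \<forall>z\<in>#m. x \<le> z}"
  define part where "part M = (\<Sum>m\<in>M. Poly_Mapping.single m (Poly_Mapping.lookup h m))" for M
  define h1 where "h1 = part (Poly_Mapping.keys h \<inter> P)"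
  define h2 where "h2 = part (Poly_Mapping.keys h - P)"
  have "h = h1 + h2"
    unfolding h1_def h2_def part_def
    by (subst (1) poly_mapping_sum_single[of h]) (rule sum.Int_Diff, simp)
  then have "g - h1 = (g - h) + h2"
    by (simp add: algebra_simps)
  also have "\<dots> \<in> Q"
  proof (rule is_ideal_add[OF Q(1)])
    show "g - h \<in> Q"
      using gh Q(2) by blast
    show "h2 \<in> Q"
      unfolding h2_def part_def
    proof (rule is_ideal_sum[OF Q(1)])
      fix m assume "m \<in> Poly_Mapping.keys h - P"
      then obtain y where "y \<in># m" "\<not> x \<le> y"
        unfolding P_def by blast
      then show "Poly_Mapping.single m (Poly_Mapping.lookup h m) \<in> Q"
        unfolding Q_def by (intro single_mem_gen_R_var) auto
    qed
  qed
  finally have "g - h1 \<in> Q" .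
  moreover have "mset_chain m \<and> (\<forall>z\<in>#m. x \<le> z)" if "m \<in> Poly_Mapping.keys h1" for m
  proof -
    have "m \<in> Poly_Mapping.keys h \<inter> P"
      using that keys_sum_single_subset[of "Poly_Mapping.lookup h" "Poly_Mapping.keys h \<inter> P"]
      unfolding h1_def part_def by blast
    then show ?thesis
      using chains[of m] unfolding P_def by simp
  qed
  ultimately show ?thesis
    using that unfolding Q_def by blast
qed

lemma mem_gen_R_not_above_if_var_mult:
  fixes g :: "('a::{lattice,finite}, 'k::comm_ring_1) lpoly"
  assumes distrib: "\<And>x y z::'a. inf x (sup y z) = sup (inf x y) (inf x z)"
    and mem: "var x * g \<in> gen_R (var ` {y. \<not> x \<le> y})"
  shows "g \<in> gen_R (var ` {y. \<not> x \<le> y})"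
proof -
  obtain h where gh: "g - h \<in> gen_R (var ` {y. \<not> x \<le> y})"
    and chains: "\<And>m. m \<in> Poly_Mapping.keys h \<Longrightarrow> mset_chain m \<and> (\<forall>z\<in>#m. x \<le> z)"
    using exists_upper_chain_congruent[OF distrib] by blast
  have "h * var x = var x * g - var x * (g - h)"
    by (simp add: algebra_simps)
  also have "\<dots> \<in> gen_R (var ` {y. \<not> x \<le> y})"
    using mem is_ideal_mult_left[OF is_ideal_gen_R gh, of "var x"]
    by (rule is_ideal_diff[OF is_ideal_gen_R])
  finally have "h * var x \<in> gen_R (var ` {y. \<not> x \<le> y})" .
  with chains have "h = 0"
    by (rule upper_chain_combination_eq_0[OF distrib])
  then show ?thesis
    using gh by simp
qed
section \<open>Distributivity makes the poset ideals a Koszul filtration\<close>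

lemma poset_ideal_not_above: "poset_ideal {y. \<not> x \<le> y}"
  unfolding poset_ideal_def by (auto dest: order.trans)

lemma poset_ideal_remove_maximal:
  assumes "poset_ideal A" "\<forall>b\<in>A. x \<le> b \<longrightarrow> b = x"
  shows "poset_ideal (A - {x})"
  using assms unfolding poset_ideal_def by (metis Diff_iff order.trans singletonD)

lemma var_mult_mem_remove_maximal:
  fixes A :: "'a::lattice set"
  assumes A: "poset_ideal A" "x \<in> A"
    and "\<not> x \<le> y" "z \<in> A"
  shows "var y * var z \<in> (gen_R (var ` (A - {x})) :: ('a, 'k::comm_ring_1) lpoly set)"
proof -
  let ?J = "gen_R (var ` (A - {x})) :: ('a, 'k) lpoly set"
  have var_mem: "var w \<in> ?J" if "w \<in> A" "w \<noteq> x" for w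
    using that by (intro gen_R_superset[THEN subsetD]) auto
  show ?thesis
  proof (cases "z = x")
    case False
    show ?thesis
      by (rule is_ideal_mult_left[OF is_ideal_gen_R var_mem[OF \<open>z \<in> A\<close> False]])
  next
    case True
    have "inf y x \<in> A"
      using A unfolding poset_ideal_def by (meson inf.cobounded2)
    moreover have "inf y x \<noteq> x"
      using \<open>\<not> x \<le> y\<close> by (metis inf.cobounded1)
    ultimately have "var (sup y x) * var (inf y x) \<in> ?J"
      by (intro is_ideal_mult_left[OF is_ideal_gen_R] var_mem)
    moreover have "hibi_binomial y x \<in> ?J"
      using hibi_binomial_mem hibi_ideal_subset_gen_R by blast
    ultimately have "hibi_binomial y x + var (sup y x) * var (inf y x) \<in> ?J"
      by (intro is_ideal_add[OF is_ideal_gen_R])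
    then show ?thesis
      unfolding True hibi_binomial_def by simp
  qed
qed

lemma colon_remove_maximal:
  fixes A :: "'a::{lattice,finite} set"
  assumes distrib: "\<And>x y z::'a. inf x (sup y z) = sup (inf x y) (inf x z)"
    and A: "poset_ideal A" "x \<in> A" "\<forall>b\<in>A. x \<le> b \<longrightarrow> b = x"
  shows "colon (gen_R (var ` (A - {x}))) (gen_R (var ` A))
    = (gen_R (var ` {y. \<not> x \<le> y}) :: ('a, 'k::comm_ring_1) lpoly set)"
proof
  let ?J = "gen_R (var ` (A - {x})) :: ('a, 'k) lpoly set"
  show "gen_R (var ` {y. \<not> x \<le> y}) \<subseteq> colon ?J (gen_R (var ` A))"
  proof (rule gen_R_least)
    show "is_ideal (colon ?J (gen_R (var ` A)))"
      by (rule is_ideal_colon[OF is_ideal_gen_R])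
    show "hibi_ideal \<subseteq> colon ?J (gen_R (var ` A))"
      using is_ideal_mult_right[OF is_ideal_hibi_ideal] hibi_ideal_subset_gen_R
      unfolding colon_def by blast
    show "var ` {y. \<not> x \<le> y} \<subseteq> colon ?J (gen_R (var ` A))"
    proof clarify
      fix y assume "\<not> x \<le> y"
      show "var y \<in> colon ?J (gen_R (var ` A))"
        using var_mult_mem_remove_maximal[OF A(1,2) \<open>\<not> x \<le> y\<close>]
        by (intro colon_gen_R_memI[OF is_ideal_gen_R hibi_ideal_subset_gen_R]) blast
    qed
  qed
  show "colon ?J (gen_R (var ` A)) \<subseteq> gen_R (var ` {y. \<not> x \<le> y})"
  proof
    fix f assume "f \<in> colon ?J (gen_R (var ` A))"
    then have "f * var x \<in> ?J"
      using A(2) gen_R_superset unfolding colon_def by blast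
    moreover have "?J \<subseteq> gen_R (var ` {y. \<not> x \<le> y})"
      using A(3) by (intro gen_R_mono) auto
    ultimately have "var x * f \<in> gen_R (var ` {y. \<not> x \<le> y})"
      by (auto simp: mult.commute)
    then show "f \<in> gen_R (var ` {y. \<not> x \<le> y})"
      by (rule mem_gen_R_not_above_if_var_mult[OF distrib])
  qed
qed

lemma gen_R_remove_maximal_step:
  fixes A :: "'a::{lattice,finite} set"
  assumes distrib: "\<And>x y z::'a. inf x (sup y z) = sup (inf x y) (inf x z)"
    and A: "poset_ideal A" "x \<in> A" "\<forall>b\<in>A. x \<le> b \<longrightarrow> b = x"
  defines "J \<equiv> gen_R (var ` (A - {x})) :: ('a, 'k::comm_ring_1) lpoly set"
  shows "poset_ideal_R J" "J \<subseteq> gen_R (var ` A)" "gen_R (var ` A) = gen_R (J \<union> {var x})"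
    "poset_ideal_R (colon J (gen_R (var ` A)))"
proof -
  show "poset_ideal_R J"
    unfolding J_def poset_ideal_R_def using poset_ideal_remove_maximal[OF A(1,3)] by blast
  show "J \<subseteq> gen_R (var ` A)"
    unfolding J_def by (rule gen_R_mono) blast
  have "var ` (A - {x}) \<union> {var x} = (var ` A :: ('a, 'k) lpoly set)"
    using A(2) by auto
  then show "gen_R (var ` A) = gen_R (J \<union> {var x})"
    unfolding J_def gen_R_Un_gen_R by (simp only:)
  show "poset_ideal_R (colon J (gen_R (var ` A)))"
    unfolding J_def colon_remove_maximal[OF distrib A] poset_ideal_R_def
    using poset_ideal_not_above by blast
qed

lemma poset_ideals_koszul_filtration:
  assumes distrib: "\<And>x y z::'a::{lattice,finite}. inf x (sup y z) = sup (inf x y) (inf x z)"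
  shows "koszul_filtration_R ({I. poset_ideal_R I} :: ('a, 'k::comm_ring_1) lpoly set set)"
  unfolding koszul_filtration_R_def
proof (intro conjI ballI impI)
  fix I :: "('a, 'k) lpoly set"
  assume "I \<in> {I. poset_ideal_R I}"
  then obtain A where "I = gen_R (var ` A)"
    unfolding poset_ideal_R_def by auto
  moreover have "linear_form (var a :: ('a, 'k) lpoly)" for a
    unfolding linear_form_def var_def by simp
  ultimately show "\<exists>S. (\<forall>f\<in>S. linear_form f) \<and> I = gen_R S"
    by blast
next
  show "hibi_ideal \<in> ({I. poset_ideal_R I} :: ('a, 'k) lpoly set set)"
    unfolding poset_ideal_R_def poset_ideal_def
    by (intro CollectI exI[of _ "{}"]) (simp add: gen_R_empty)
  show "max_ideal_R \<in> ({I. poset_ideal_R I} :: ('a, 'k) lpoly set set)"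
    unfolding poset_ideal_R_def poset_ideal_def max_ideal_R_def
    by (intro CollectI exI[of _ UNIV]) simp
next
  fix I :: "('a, 'k) lpoly set"
  assume "I \<in> {I. poset_ideal_R I}" "I \<noteq> hibi_ideal"
  then obtain A where A: "poset_ideal A" "I = gen_R (var ` A)"
    unfolding poset_ideal_R_def by blast
  have "A \<noteq> {}"
  proof
    assume "A = {}"
    then show False
      using \<open>I \<noteq> hibi_ideal\<close> A(2) by (simp add: gen_R_empty)
  qed
  then obtain x where x: "x \<in> A" "\<forall>b\<in>A. x \<le> b \<longrightarrow> b = x"
    using finite_has_maximal[OF finite[of A]] by blast
  show "\<exists>J\<in>{I. poset_ideal_R I}. J \<subseteq> I \<and> (\<exists>f. I = gen_R (J \<union> {f}))
      \<and> colon J I \<in> {I. poset_ideal_R I}"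
    using gen_R_remove_maximal_step[OF distrib A(1) x, where 'k='k] unfolding A(2) by blast
qed
section \<open>Koszul filtrations by poset ideals force distributivity\<close>

lemma lookup_mult_singleton:
  fixes r f :: "('a, 'k::comm_ring_1) lpoly"
  assumes "Poly_Mapping.lookup f {#} = 0"
  shows "Poly_Mapping.lookup (r * f) {#z#} = Poly_Mapping.lookup r {#} * Poly_Mapping.lookup f {#z#}"
proof -
  have "Poly_Mapping.lookup (r * f) {#z#} =
      (\<Sum>n\<in>Poly_Mapping.keys f.
        if n \<subseteq># {#z#} then Poly_Mapping.lookup r ({#z#} - n) * Poly_Mapping.lookup f n else 0)"
    by (subst (1) poly_mapping_sum_single[of f])
      (simp add: sum_distrib_left lookup_sum lookup_mult_single)
  also have "\<dots> = (\<Sum>n\<in>Poly_Mapping.keys f.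
      if n = {#z#} then Poly_Mapping.lookup r {#} * Poly_Mapping.lookup f n else 0)"
  proof (rule sum.cong[OF refl])
    fix n assume "n \<in> Poly_Mapping.keys f"
    then have "n \<noteq> {#}"
      using assms by (auto simp: in_keys_iff)
    then show "(if n \<subseteq># {#z#} then Poly_Mapping.lookup r ({#z#} - n) * Poly_Mapping.lookup f n else 0)
      = (if n = {#z#} then Poly_Mapping.lookup r {#} * Poly_Mapping.lookup f n else 0)"
      by (auto simp: nonempty_subseteq_mset_eq_single)
  qed
  also have "\<dots> = Poly_Mapping.lookup r {#} * Poly_Mapping.lookup f {#z#}"
    by (simp add: in_keys_iff)
  finally show ?thesis .
qed

text \<open>Adjoining one linear form f to an ideal generated by variables adds at most one variable:
  comparing coefficients of degree one, two new variables would both be nonzero multiples of f.\<close>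

lemma gen_R_insert_new_variable_unique:
  fixes f :: "('a::lattice, 'k::idom) lpoly"
  assumes f: "Poly_Mapping.lookup f {#} = 0"
    and z: "var z \<in> gen_R (gen_R (var ` A) \<union> {f})" "z \<notin> A"
    and w: "var w \<in> gen_R (gen_R (var ` A) \<union> {f})" "w \<notin> A"
  shows "z = w"
proof (rule ccontr)
  assume "z \<noteq> w"
  let ?J = "gen_R (var ` A) :: ('a, 'k) lpoly set"
  have coeff: "Poly_Mapping.lookup (var v :: ('a, 'k) lpoly) {#u#} = Poly_Mapping.lookup r {#} * Poly_Mapping.lookup f {#u#}"
    if "var v = j + r * f" "j \<in> ?J" "u \<notin> A" for v u j r
    using lookup_singleton_gen_R_var[OF that(2,3)] lookup_mult_singleton[OF f]
    by (simp add: that(1) lookup_add)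
  obtain j1 r1 where j1: "j1 \<in> ?J" "var z = j1 + r1 * f"
    using gen_R_insert_elim[OF is_ideal_gen_R hibi_ideal_subset_gen_R z(1)] .
  obtain j2 r2 where j2: "j2 \<in> ?J" "var w = j2 + r2 * f"
    using gen_R_insert_elim[OF is_ideal_gen_R hibi_ideal_subset_gen_R w(1)] .
  have "1 = Poly_Mapping.lookup r1 {#} * Poly_Mapping.lookup f {#z#}"
    using coeff[OF j1(2,1) z(2)] by (simp add: var_def)
  moreover have "0 = Poly_Mapping.lookup r1 {#} * Poly_Mapping.lookup f {#w#}"
    using coeff[OF j1(2,1) w(2)] \<open>z \<noteq> w\<close> by (simp add: var_def lookup_single)
  moreover have "1 = Poly_Mapping.lookup r2 {#} * Poly_Mapping.lookup f {#w#}"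
    using coeff[OF j2(2,1) w(2)] by (simp add: var_def)
  ultimately show False
    by (metis mult_eq_0_iff zero_neq_one)
qed

lemma single_not_mem_gen_R_var:
  fixes m :: "'a::{lattice,finite} multiset"
  assumes above: "\<forall>z\<in>#m. x \<le> z" and avoid: "\<forall>y\<in>A. \<not> x \<le> y"
  shows "Poly_Mapping.single m (1::'k::comm_ring_1) \<notin> gen_R (var ` A)"
proof
  define S where "S = multisets_of_size {z. x \<le> z} (size m)"
  have finS: "finite S"
    unfolding S_def by (rule finite_multisets_of_size) simp
  assume "Poly_Mapping.single m (1::'k) \<in> gen_R (var ` A)"
  then have "coeff_sum S (Poly_Mapping.single m (1::'k)) = 0"
  proof (rule coeff_sum_gen_R_var_eq_0[OF finS, rotated -1])
    fix a b :: 'a and r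
    have "x \<le> a \<and> x \<le> b \<longleftrightarrow> x \<le> sup a b \<and> x \<le> inf a b"
      by (auto intro: le_supI1)
    then show "r + {#a, b#} \<in> S \<longleftrightarrow> r + {#sup a b, inf a b#} \<in> S"
      unfolding S_def multisets_of_size_def by auto
  next
    fix y r
    assume "y \<in> A"
    then show "r + {#y#} \<notin> S"
      using avoid unfolding S_def multisets_of_size_def by auto
  qed
  moreover have "m \<in> S"
    using above unfolding S_def multisets_of_size_def by auto
  ultimately show False
    using finS by (simp add: coeff_sum_single_one)
qed

lemma var_mult_diff_not_mem_gen_R_not_above:
  fixes a c i :: "'a::{lattice,finite}"
  assumes "a \<le> i" "c \<le> i" "a \<noteq> c"
  shows "var i * (var a - var c) \<notin> (gen_R (var ` {y. \<not> a \<le> y}) :: ('a, 'k::comm_ring_1) lpoly set)"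
proof
  define S where "S = (\<lambda>(u, v). {#u, v#}) ` {(u, v). inf u v = a \<and> sup u v = i}"
  have finS: "finite S"
    unfolding S_def by simp
  have pair_mem: "{#u, v#} \<in> S \<longleftrightarrow> inf u v = a \<and> sup u v = i" for u v
    unfolding S_def by (force simp: add_mset_eq_single add_eq_conv_ex inf_commute sup_commute)
  have pair: "\<exists>u v. m = {#u, v#}" if "m \<in> S" for m
    using that unfolding S_def by auto
  have size_pair: "size m = 2" if "m \<in> S" for m
    using pair[OF that] by auto
  assume "var i * (var a - var c) \<in> (gen_R (var ` {y. \<not> a \<le> y}) :: ('a, 'k) lpoly set)"
  then have "coeff_sum S (var i * (var a - var c) :: ('a, 'k) lpoly) = 0"
  proof (rule coeff_sum_gen_R_var_eq_0[OF finS, rotated -1])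
    fix p q :: 'a and r
    have "r + {#p, q#} \<in> S \<longleftrightarrow> r = {#} \<and> {#p, q#} \<in> S" for p q
      using size_pair[of "r + {#p, q#}"] by auto
    moreover have "inf (sup p q) (inf p q) = inf p q" "sup (sup p q) (inf p q) = sup p q"
      by (simp_all add: inf_absorb2 sup_absorb1 le_supI1)
    ultimately show "r + {#p, q#} \<in> S \<longleftrightarrow> r + {#sup p q, inf p q#} \<in> S"
      by (simp add: pair_mem)
  next
    fix y r
    assume "y \<in> {y. \<not> a \<le> y}"
    then show "r + {#y#} \<notin> S"
      using pair[of "r + {#y#}"] pair_mem
      by (auto simp: add_eq_conv_ex add_mset_eq_single intro: le_infI1 le_infI2)
  qed
  moreover have "{#i, a#} \<in> S" "{#i, c#} \<notin> S"
    using assms by (auto simp: pair_mem inf_absorb2 sup_absorb1)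
  ultimately show False
    using finS by (simp add: right_diff_distrib var_mult_var coeff_sum_diff coeff_sum_single_one)
qed

definition variables_in :: "('a, 'k::comm_ring_1) lpoly set \<Rightarrow> 'a set" where
  "variables_in I = {z. var z \<in> I}"

lemma variables_in_gen_R_var:
  "variables_in (gen_R (var ` A) :: ('a::lattice, 'k::comm_ring_1) lpoly set) = A"
  unfolding variables_in_def by (simp add: var_mem_gen_R_var_iff)

lemma poset_ideal_R_variables_in:
  assumes "poset_ideal_R (I :: ('a::lattice, 'k::comm_ring_1) lpoly set)"
  shows "I = gen_R (var ` variables_in I)" "poset_ideal (variables_in I)"
  using assms unfolding poset_ideal_R_def by (auto simp: variables_in_gen_R_var)

lemma not_poset_ideal_R_colon_self: "\<not> poset_ideal_R (colon I I :: ('a::lattice, 'k::comm_ring_1) lpoly set)"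
proof
  assume "poset_ideal_R (colon I I)"
  moreover have "1 \<in> colon I I"
    unfolding colon_def by simp
  ultimately show False
    using one_not_mem_gen_R_var unfolding poset_ideal_R_def by blast
qed

lemma colon_subset_gen_R_not_above:
  fixes J :: "('a::{lattice,finite}, 'k::comm_ring_1) lpoly set"
  assumes "poset_ideal_R (colon J I)" and J: "J = gen_R (var ` A)" "poset_ideal A"
    and "x \<notin> A" "var x \<in> I"
  shows "colon J I \<subseteq> gen_R (var ` {y. \<not> x \<le> y})"
proof -
  obtain C where C: "colon J I = gen_R (var ` C)"
    using assms(1) unfolding poset_ideal_R_def by blast
  have "\<not> x \<le> y" if "y \<in> C" for y
  proof
    assume "x \<le> y"
    have "var y * var x \<in> J"
      using that C \<open>var x \<in> I\<close> gen_R_superset unfolding colon_def by blast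
    moreover have "\<forall>z\<in>A. \<not> x \<le> z"
      using \<open>x \<notin> A\<close> J(2) unfolding poset_ideal_def by blast
    ultimately show False
      using single_not_mem_gen_R_var[of "{#y, x#}" x A, where 'k='k] \<open>x \<le> y\<close> J(1) by (simp add: var_mult_var)
  qed
  then show ?thesis
    unfolding C by (intro gen_R_mono image_mono) blast
qed

lemma koszul_poset_filtration_step:
  fixes F :: "('a::{lattice,finite}, 'k::idom) lpoly set set"
  assumes K: "koszul_filtration_R F" and PF: "\<forall>I\<in>F. poset_ideal_R I"
  obtains I J where "I \<in> F" "J \<in> F" "colon J I \<in> F"
    "x \<in> variables_in I" "x \<notin> variables_in J" "variables_in I \<subseteq> insert x (variables_in J)"
proof -
  have rep: "I = gen_R (var ` variables_in I)" "poset_ideal (variables_in I)" if "I \<in> F" for I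
    using poset_ideal_R_variables_in PF that by blast+
  have "max_ideal_R \<in> F" "x \<in> variables_in (max_ideal_R :: ('a, 'k) lpoly set)"
    using K unfolding koszul_filtration_R_def max_ideal_R_def
    by (auto simp: variables_in_gen_R_var[of UNIV, simplified])
  then obtain I where I: "I \<in> F" "x \<in> variables_in I"
    and I_min: "\<And>I'. I' \<in> F \<Longrightarrow> x \<in> variables_in I' \<Longrightarrow>
      card (variables_in I) \<le> card (variables_in I')"
    using ex_has_least_nat[of "\<lambda>I. I \<in> F \<and> x \<in> variables_in I" max_ideal_R
        "\<lambda>I. card (variables_in I)"]
    by blast
  have "I \<noteq> hibi_ideal"
    using I(2) variables_in_gen_R_var[of "{}"] by (auto simp: gen_R_empty)
  then obtain J f where J: "J \<in> F" "J \<subseteq> I" "I = gen_R (J \<union> {f})" "colon J I \<in> F"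
    using K I(1) unfolding koszul_filtration_R_def by blast
  have "J \<noteq> I"
    using PF J(4) not_poset_ideal_R_colon_self by metis
  then have "variables_in J \<subset> variables_in I"
    using J(2) rep[OF J(1)] rep[OF I(1)] unfolding variables_in_def by auto
  then have "card (variables_in J) < card (variables_in I)"
    by (rule psubset_card_mono[OF finite])
  then have x_new: "x \<notin> variables_in J"
    using I_min[OF J(1)] by (meson leD)
  moreover have "variables_in I \<subseteq> insert x (variables_in J)"
  proof
    fix z
    assume z: "z \<in> variables_in I"
    have "f \<in> gen_R (var ` variables_in I)"
      using J(3) rep(1)[OF I(1)] gen_R_superset by blast
    then have f0: "Poly_Mapping.lookup f {#} = 0"
      by (rule lookup_empty_gen_R_var)
    have mem: "var v \<in> gen_R (gen_R (var ` variables_in J) \<union> {f})" if "v \<in> variables_in I" for v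
      using that J(3) rep(1)[OF J(1)] unfolding variables_in_def by simp
    have "z = x" if "z \<notin> variables_in J"
      by (rule gen_R_insert_new_variable_unique[OF f0 mem[OF z] that mem[OF I(2)] x_new])
    then show "z \<in> insert x (variables_in J)"
      by blast
  qed
  ultimately show ?thesis
    using that I(1,2) J(1,4) by blast
qed

lemma koszul_poset_filtration_cancellative:
  fixes F :: "('a::{lattice,finite}, 'k::idom) lpoly set set" and a b c :: 'a
  assumes K: "koszul_filtration_R F" and PF: "\<forall>I\<in>F. poset_ideal_R I"
    and meet: "inf a b = inf c b" and join: "sup a b = sup c b"
  shows "a = c"
proof (rule ccontr)
  assume "a \<noteq> c"
  define x where "x = inf a b"
  define i where "i = sup a b"
  define g where "g = (var i * (var a - var c) :: ('a, 'k) lpoly)"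
  obtain I J where IJ: "I \<in> F" "J \<in> F" "colon J I \<in> F"
    "x \<in> variables_in I" "x \<notin> variables_in J" "variables_in I \<subseteq> insert x (variables_in J)"
    using koszul_poset_filtration_step[OF K PF] by blast
  have J: "J = gen_R (var ` variables_in J)" "poset_ideal (variables_in J)"
    using poset_ideal_R_variables_in PF IJ(2) by blast+
  have I: "I = gen_R (var ` variables_in I)"
    using poset_ideal_R_variables_in PF IJ(1) by blast
  have "g * var x = var c * hibi_binomial a b - var a * hibi_binomial c b"
    unfolding g_def hibi_binomial_def x_def i_def using meet join by (simp add: algebra_simps)
  also have "\<dots> \<in> hibi_ideal"
    by (intro is_ideal_diff[OF is_ideal_hibi_ideal] is_ideal_mult_left[OF is_ideal_hibi_ideal]
        hibi_binomial_mem)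
  finally have "g * var x \<in> J"
    using J(1) hibi_ideal_subset_gen_R by blast
  have J_ideal: "is_ideal J" "hibi_ideal \<subseteq> J"
    by (subst J(1), rule is_ideal_gen_R, subst J(1), rule hibi_ideal_subset_gen_R)
  have "g \<in> colon J (gen_R (var ` variables_in I))"
  proof (rule colon_gen_R_memI[OF J_ideal], clarify)
    fix z assume "z \<in> variables_in I"
    then consider "z = x" | "var z \<in> J"
      using IJ(6) unfolding variables_in_def by blast
    then show "g * var z \<in> J"
      by cases (use \<open>g * var x \<in> J\<close> is_ideal_mult_left[OF J_ideal(1)] in auto)
  qed
  then have "g \<in> colon J I"
    using I by simp
  have "colon J I \<subseteq> gen_R (var ` {y. \<not> x \<le> y})"
    using PF IJ(3,4,5) J unfolding variables_in_def
    by (intro colon_subset_gen_R_not_above) auto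
  also have "\<dots> \<subseteq> gen_R (var ` {y. \<not> a \<le> y})"
    unfolding x_def by (intro gen_R_mono image_mono) (auto intro: le_infI1)
  finally have "colon J I \<subseteq> gen_R (var ` {y. \<not> a \<le> y})" .
  moreover have "a \<le> i" "c \<le> i"
    unfolding i_def by (rule sup_ge1, subst join, rule sup_ge1)
  ultimately show False
    using var_mult_diff_not_mem_gen_R_not_above[of a i c, where 'k='k] \<open>a \<noteq> c\<close> \<open>g \<in> colon J I\<close>
    unfolding g_def by blast
qed

theorem theorem2p1:
  fixes L_type :: "'a::{lattice, finite} itself" and K_type :: "'k::field itself"
  shows "(class.distrib_lattice (inf :: 'a \<Rightarrow> 'a \<Rightarrow> 'a) (\<le>) (<) sup
           \<longleftrightarrow> koszul_filtration_R ({I. poset_ideal_R I} :: ('a, 'k) lpoly set set))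
       \<and> (koszul_filtration_R ({I. poset_ideal_R I} :: ('a, 'k) lpoly set set)
           \<longleftrightarrow> (\<exists>F :: ('a, 'k) lpoly set set. koszul_filtration_R F \<and> (\<forall>I\<in>F. poset_ideal_R I)))"
proof -
  have one_two: "koszul_filtration_R ({I. poset_ideal_R I} :: ('a, 'k) lpoly set set)"
    if "class.distrib_lattice (inf :: 'a \<Rightarrow> 'a \<Rightarrow> 'a) (\<le>) (<) sup"
    using poset_ideals_koszul_filtration distrib_lattice.inf_sup_distrib1[OF that] by blast
  have three_one: "class.distrib_lattice (inf :: 'a \<Rightarrow> 'a \<Rightarrow> 'a) (\<le>) (<) sup"
    if "koszul_filtration_R F" "\<forall>I\<in>F. poset_ideal_R I" for F :: "('a, 'k) lpoly set set"
    using cancellative_imp_distrib koszul_poset_filtration_cancellative[OF that] by blast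
  show ?thesis
    using one_two three_one by blast
qed

end
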